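(* (i) There exists a measurable map $\Psi:\Gamma\to B$ such that for every $a\in\Gamma$, $\beta=\Psi(a)$ satisfies $a=\sigma\sigma'+\sigma\beta+\beta'\sigma'$. (ii) There exists a measurable map $\Phi:B\to\prod_{i=1}^d[-\kappa^-_i,\kappa^+_i]$ such that $v_i\beta+\Phi(\beta)\in\prod_{j=1}^d[-\kappa^-_j,\kappa^+_j]$ for all $i=1,\dots,d+1$ and all $\beta\in B$.
   Context: Let $\sigma$ be an invertible $d\times d$ matrix, $\kappa^\pm_i\ge0$ for $i=1,\dots,d$, and $v_1,\dots,v_{d+1}\in\mathbb{R}^d$ row vectors forming a regular simplex with $\langle v_i,v_j\rangle=-1$ ($i\ne j$), $\sum_j v_j=0$, $\sum_j v_j'v_j=(d+1)I$. $B$ is the set of $d\times d$ matrices $\beta=[\beta_1\cdots\beta_d]$ whose $k$-th column is $\beta_k=\sum_{j=1}^{d+1}w_{jk}v_j'$ for some $w_{jk}\in[0,(\kappa^+_k+\kappa^-_k)/(d+1)]$, and $\Gamma=\{\sigma\sigma'+\sigma\beta+\beta'\sigma':\beta\in B\}$. $v_i\beta$ is the row vector obtained by multiplying the row vector $v_i$ by $\beta$. *)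

theory Defs
  imports "HOL-Analysis.Analysis"
begin

text \<open>Dimension d = CARD('n). Matrices are real^'n^'n (row-major: A $ row $ col).
  The simplex vectors v_1..v_{d+1} are indexed by j in {1..CARD('n)+1}.\<close>

definition regular_simplex :: "(nat \<Rightarrow> real^'n::finite) \<Rightarrow> bool" where
  "regular_simplex v \<longleftrightarrow>
     (\<forall>i\<in>{1..CARD('n)+1}. \<forall>j\<in>{1..CARD('n)+1}. i \<noteq> j \<longrightarrow> inner (v i) (v j) = -1) \<and>
     (\<Sum>j\<in>{1..CARD('n)+1}. v j) = 0 \<and>
     (\<Sum>j\<in>{1..CARD('n)+1}. (\<chi> a b. v j $ a * v j $ b)) = real (CARD('n)+1) *\<^sub>R mat 1"

definition Bset :: "(nat \<Rightarrow> real^'n::finite) \<Rightarrow> ('n \<Rightarrow> real) \<Rightarrow> ('n \<Rightarrow> real) \<Rightarrow> (real^'n^'n) set" where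
  "Bset v kp km = {\<beta>. \<exists>w :: nat \<Rightarrow> 'n \<Rightarrow> real.
      (\<forall>j\<in>{1..CARD('n)+1}. \<forall>k. 0 \<le> w j k \<and> w j k \<le> (kp k + km k) / real (CARD('n)+1)) \<and>
      (\<forall>a k. \<beta> $ a $ k = (\<Sum>j\<in>{1..CARD('n)+1}. w j k * v j $ a))}"

definition Gammaset :: "real^'n^'n \<Rightarrow> (nat \<Rightarrow> real^'n::finite) \<Rightarrow> ('n \<Rightarrow> real) \<Rightarrow> ('n \<Rightarrow> real) \<Rightarrow> (real^'n^'n) set" where
  "Gammaset \<sigma> v kp km = {\<sigma> ** transpose \<sigma> + \<sigma> ** \<beta> + transpose \<beta> ** transpose \<sigma> | \<beta>. \<beta> \<in> Bset v kp km}"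

definition kbox :: "('n::finite \<Rightarrow> real) \<Rightarrow> ('n \<Rightarrow> real) \<Rightarrow> (real^'n) set" where
  "kbox kp km = {x. \<forall>j. - km j \<le> x $ j \<and> x $ j \<le> kp j}"

end

theory Submission
  imports Defs
begin

(* For (i), write a = L beta with the affine map L beta = sigma sigma' + sigma beta + beta' sigma'.
   The set B is a Minkowski sum of linear images of boxes, hence compact and convex, so every fibre
   {beta in B. L beta = a} over a point of Gamma is a nonempty compact convex set and has a unique
   point of least norm; Psi picks it.  Psi is Borel because, for closed C, Psi a lies in C iff for
   every rational q the fibre meets C inside the ball of radius q whenever it meets that ball, and
   both conditions say that a lies in the L-image of a compact set.
   For (ii), if the k-th column of beta has weights w_jk, then (v_i beta)_k = (d+1) w_ik - sum_j w_jk
   by the simplex relations, so these d+1 numbers have mean 0 and spread at most kp_k + km_k.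
   Shifting them by - km_k - min_i (v_i beta)_k moves all of them into [- km_k, kp_k], and this
   shift depends continuously on beta. *)

lemma closest_point_in_closed_iff:
  fixes S :: "'a::{real_inner,heine_borel} set"
  assumes "convex S" "closed S" "S \<noteq> {}" "closed C"
  shows "closest_point S z \<in> C \<longleftrightarrow>
    (\<forall>q::rat. S \<inter> cball z (of_rat q) \<noteq> {} \<longrightarrow> S \<inter> C \<inter> cball z (of_rat q) \<noteq> {})"
    (is "?p \<in> C \<longleftrightarrow> ?rhs")
proof
  assume "?p \<in> C"
  then show ?rhs
    using closest_point_exists[OF assms(2,3), of z] by (fastforce simp: dist_commute)
next
  assume rhs: ?rhs
  have p: "?p \<in> S" "\<And>x. x \<in> S \<Longrightarrow> dist z ?p \<le> dist z x"
    using closest_point_exists[OF assms(2,3)] by auto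
  have near: "\<exists>x\<in>S \<inter> C. dist z x \<le> of_rat q" if "dist z ?p < of_rat q" for q
  proof -
    have "?p \<in> S \<inter> cball z (of_rat q)" using p(1) that by simp
    then show ?thesis using rhs by fastforce
  qed
  obtain q :: rat where "dist z ?p < of_rat q"
    using of_rat_dense[of "dist z ?p" "dist z ?p + 1"] by auto
  then have "S \<inter> C \<noteq> {}" using near by blast
  moreover have "closed (S \<inter> C)" using assms by (simp add: closed_Int)
  ultimately have y: "closest_point (S \<inter> C) z \<in> S \<inter> C"
      "\<And>x. x \<in> S \<inter> C \<Longrightarrow> dist z (closest_point (S \<inter> C) z) \<le> dist z x"
    using closest_point_exists by blast+
  define y where "y = closest_point (S \<inter> C) z"
  have "dist z y \<le> dist z ?p"
  proof (rule ccontr)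
    assume "\<not> ?thesis"
    then obtain q :: rat where q: "dist z ?p < of_rat q" "of_rat q < dist z y"
      using of_rat_dense by (meson not_le)
    from near[OF q(1)] obtain x where "x \<in> S \<inter> C" "dist z x \<le> of_rat q" ..
    with y(2) q(2) show False unfolding y_def by fastforce
  qed
  then have "y = ?p"
    using y p unfolding y_def by (intro closest_point_unique assms) force+
  with y show "?p \<in> C" unfolding y_def by simp
qed

lemma measurable_closest_point_fibre:
  fixes L :: "'a::{real_inner,heine_borel} \<Rightarrow> 'b::t2_space"
  assumes B: "compact B" and L: "continuous_on B L" and fibre: "\<And>y. convex {x\<in>B. L x = y}"
  shows "(\<lambda>y. closest_point {x\<in>B. L x = y} z) \<in> restrict_space borel (L ` B) \<rightarrow>\<^sub>M borel"
  unfolding borel_eq_closed[where 'a='a]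
proof (rule measurable_measure_of)
  fix C :: "'a set"
  assume "C \<in> Collect closed"
  then have C: "closed C" by simp
  define K where "K r X = L ` (B \<inter> (X \<inter> cball z r))" for r X
  have closed_K: "closed (K r X)" if "closed X" for r X
  proof -
    have "compact (B \<inter> (X \<inter> cball z r))"
      using B that by (simp add: compact_Int_closed closed_Int)
    then show ?thesis
      unfolding K_def by (intro compact_imp_closed compact_continuous_image continuous_on_subset[OF L]) auto
  qed
  have K_iff: "y \<in> K r X \<longleftrightarrow> {x\<in>B. L x = y} \<inter> X \<inter> cball z r \<noteq> {}" for y r X
    unfolding K_def by blast
  have "closest_point {x\<in>B. L x = y} z \<in> C \<longleftrightarrow>
      (\<forall>q::rat. y \<in> K (of_rat q) UNIV \<longrightarrow> y \<in> K (of_rat q) C)" if "y \<in> L ` B" for y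
  proof (rule closest_point_in_closed_iff[OF fibre _ _ C, THEN trans])
    show "closed {x\<in>B. L x = y}"
      using B L by (intro continuous_closed_preimage_constant compact_imp_closed)
    show "{x\<in>B. L x = y} \<noteq> {}" using that by auto
  qed (simp add: K_iff)
  then have "(\<lambda>y. closest_point {x\<in>B. L x = y} z) -` C \<inter> space (restrict_space borel (L ` B))
      = L ` B \<inter> (\<Inter>q::rat. - K (of_rat q) UNIV \<union> K (of_rat q) C)"
    by (auto simp: space_restrict_space)
  also have "\<dots> \<in> sets (restrict_space borel (L ` B))"
    unfolding sets_restrict_space using closed_K C by (intro imageI) auto
  finally show "(\<lambda>y. closest_point {x\<in>B. L x = y} z) -` C \<inter> space (restrict_space borel (L ` B))
      \<in> sets (restrict_space borel (L ` B))" .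
qed (auto simp: space_restrict_space)

lemma exists_measurable_section:
  fixes L :: "'a::{real_inner,heine_borel} \<Rightarrow> 'b::t2_space"
  assumes B: "compact B" and L: "continuous_on B L" and fibre: "\<And>y. convex {x\<in>B. L x = y}"
  shows "\<exists>\<Psi>. \<Psi> \<in> restrict_space borel (L ` B) \<rightarrow>\<^sub>M restrict_space borel B \<and>
      (\<forall>y\<in>L ` B. \<Psi> y \<in> B \<and> L (\<Psi> y) = y)"
proof -
  define \<Psi> where "\<Psi> y = closest_point {x\<in>B. L x = y} 0" for y
  have \<Psi>: "\<Psi> y \<in> {x\<in>B. L x = y}" if "y \<in> L ` B" for y
    unfolding \<Psi>_def using B L that
    by (intro closest_point_in_set continuous_closed_preimage_constant compact_imp_closed) auto
  have "\<Psi> \<in> restrict_space borel (L ` B) \<rightarrow>\<^sub>M restrict_space borel B"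
    using measurable_closest_point_fibre[OF B L fibre] \<Psi> unfolding \<Psi>_def
    by (intro measurable_restrict_space2) (auto simp: space_restrict_space)
  with \<Psi> show ?thesis by blast
qed

lemma exists_measurable_section_affine:
  fixes f :: "'a::euclidean_space \<Rightarrow> 'b::euclidean_space"
  assumes f: "linear f" and B: "compact B" "convex B"
  shows "\<exists>\<Psi>. \<Psi> \<in> restrict_space borel ((\<lambda>x. c + f x) ` B) \<rightarrow>\<^sub>M restrict_space borel B \<and>
      (\<forall>y\<in>(\<lambda>x. c + f x) ` B. \<Psi> y \<in> B \<and> c + f (\<Psi> y) = y)"
proof (rule exists_measurable_section[OF B(1)])
  show "continuous_on B (\<lambda>x. c + f x)"
    using linear_continuous_on[OF f[unfolded linear_conv_bounded_linear]] by (intro continuous_intros)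
  fix y
  have "{x\<in>B. c + f x = y} = B \<inter> f -` {y - c}" by (auto simp: algebra_simps)
  then show "convex {x\<in>B. c + f x = y}"
    using B(2) by (simp add: convex_Int convex_linear_vimage[OF f])
qed

lemma compact_set_plus:
  fixes S T :: "'a::real_normed_vector set"
  assumes "compact S" "compact T"
  shows "compact (S + T)"
proof -
  have "S + T = {x + y | x y. x \<in> S \<and> y \<in> T}" by (auto simp: set_plus_def)
  then show ?thesis using compact_sums[OF assms] by simp
qed

lemma compact_set_sum:
  fixes S :: "'i \<Rightarrow> 'a::real_normed_vector set"
  assumes "\<And>i. i \<in> I \<Longrightarrow> compact (S i)"
  shows "compact (\<Sum>i\<in>I. S i)"
  using assms by (induction I rule: infinite_finite_induct) (auto simp: compact_set_plus)

lemma Bset_eq_set_sum: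
  fixes v :: "nat \<Rightarrow> real^'n::finite"
  shows "Bset v kp km = (\<Sum>j\<in>{1..CARD('n)+1}.
    (\<lambda>u. \<chi> a k. u $ k * v j $ a) ` cbox 0 (\<chi> k. (kp k + km k) / real (CARD('n)+1)))"
proof -
  define J where "J = {1..CARD('n)+1}"
  define c where "c = (\<chi> k. (kp k + km k) / real (CARD('n)+1))"
  define M where "M j u = (\<chi> a k. u $ k * v j $ a :: real^'n^'n)" for j and u :: "real^'n"
  have "Bset v kp km = {\<beta>. \<exists>w. (\<forall>j\<in>J. \<forall>k. 0 \<le> w j k \<and> w j k \<le> c $ k) \<and>
      (\<forall>a k. \<beta> $ a $ k = (\<Sum>j\<in>J. w j k * v j $ a))}"
    unfolding Bset_def J_def c_def by simp
  also have "\<dots> = {sum s J | s. \<forall>j\<in>J. s j \<in> M j ` cbox 0 c}"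
  proof (intro set_eqI iffI)
    fix \<beta> :: "real^'n^'n"
    assume "\<beta> \<in> {\<beta>. \<exists>w. (\<forall>j\<in>J. \<forall>k. 0 \<le> w j k \<and> w j k \<le> c $ k) \<and>
      (\<forall>a k. \<beta> $ a $ k = (\<Sum>j\<in>J. w j k * v j $ a))}"
    then obtain w where w: "\<forall>j\<in>J. \<forall>k. 0 \<le> w j k \<and> w j k \<le> c $ k"
      and \<beta>: "\<forall>a k. \<beta> $ a $ k = (\<Sum>j\<in>J. w j k * v j $ a)"
      by blast
    have "\<beta> = (\<Sum>j\<in>J. M j (\<chi> k. w j k))" using \<beta> by (simp add: vec_eq_iff M_def)
    moreover have "M j (\<chi> k. w j k) \<in> M j ` cbox 0 c" if "j \<in> J" for j
      using w that by (intro imageI) (simp add: mem_box_cart)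
    ultimately show "\<beta> \<in> {sum s J | s. \<forall>j\<in>J. s j \<in> M j ` cbox 0 c}" by blast
  next
    fix \<beta> :: "real^'n^'n"
    assume "\<beta> \<in> {sum s J | s. \<forall>j\<in>J. s j \<in> M j ` cbox 0 c}"
    then obtain s where \<beta>: "\<beta> = sum s J" and "\<forall>j\<in>J. \<exists>u. u \<in> cbox 0 c \<and> s j = M j u"
      by blast
    from bchoice[OF this(2)] obtain u where u: "\<forall>j\<in>J. u j \<in> cbox 0 c \<and> s j = M j (u j)" ..
    have "\<forall>j\<in>J. \<forall>k. 0 \<le> u j $ k \<and> u j $ k \<le> c $ k" using u by (simp add: mem_box_cart)
    moreover have "\<forall>a k. \<beta> $ a $ k = (\<Sum>j\<in>J. u j $ k * v j $ a)" using u by (simp add: \<beta> M_def)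
    ultimately show "\<beta> \<in> {\<beta>. \<exists>w. (\<forall>j\<in>J. \<forall>k. 0 \<le> w j k \<and> w j k \<le> c $ k) \<and>
      (\<forall>a k. \<beta> $ a $ k = (\<Sum>j\<in>J. w j k * v j $ a))}"
      by (intro CollectI exI[of _ "\<lambda>j k. u j $ k"] conjI)
  qed
  also have "\<dots> = (\<Sum>j\<in>J. M j ` cbox 0 c)"
    unfolding J_def by (rule set_sum_alt[symmetric]) simp
  finally show ?thesis unfolding J_def c_def M_def .
qed

lemma linear_outer_product:
  "linear (\<lambda>u :: real^'n::finite. \<chi> a k. u $ k * x $ a :: real^'n^'m::finite)"
  by (intro linearI) (simp_all add: vec_eq_iff algebra_simps)

lemma compact_Bset: "compact (Bset v kp km)"
  unfolding Bset_eq_set_sum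
  by (intro compact_set_sum compact_continuous_image linear_continuous_on compact_cbox
      linear_outer_product[THEN linear_conv_bounded_linear[THEN iffD1]])

lemma convex_Bset: "convex (Bset v kp km)"
  unfolding Bset_eq_set_sum
  by (intro convex_set_sum convex_linear_image convex_box linear_outer_product)

lemma linear_mult_plus_transpose_mult:
  fixes \<sigma> :: "real^'n::finite^'n"
  shows "linear (\<lambda>\<beta>. \<sigma> ** \<beta> + transpose \<beta> ** transpose \<sigma>)"
  by (intro linearI)
    (simp_all add: vec_eq_iff matrix_matrix_mult_def transpose_def sum.distrib sum_distrib_left algebra_simps)

lemma exists_measurable_Gammaset_section:
  fixes \<sigma> :: "real^'n::finite^'n"
  shows "\<exists>\<Psi>. \<Psi> \<in> restrict_space borel (Gammaset \<sigma> v kp km) \<rightarrow>\<^sub>M restrict_space borel (Bset v kp km) \<and>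
      (\<forall>a\<in>Gammaset \<sigma> v kp km. \<Psi> a \<in> Bset v kp km \<and>
         a = \<sigma> ** transpose \<sigma> + \<sigma> ** \<Psi> a + transpose (\<Psi> a) ** transpose \<sigma>)"
proof -
  let ?L = "\<lambda>\<beta>. \<sigma> ** transpose \<sigma> + (\<sigma> ** \<beta> + transpose \<beta> ** transpose \<sigma>)"
  have Gammaset: "Gammaset \<sigma> v kp km = ?L ` Bset v kp km"
    unfolding Gammaset_def by (auto simp: add.assoc)
  obtain \<Psi> where
      "\<Psi> \<in> restrict_space borel (?L ` Bset v kp km) \<rightarrow>\<^sub>M restrict_space borel (Bset v kp km)"
      "\<forall>a\<in>?L ` Bset v kp km. \<Psi> a \<in> Bset v kp km \<and> ?L (\<Psi> a) = a"
    using exists_measurable_section_affine[OF linear_mult_plus_transpose_mult compact_Bset convex_Bset]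
    by blast
  then show ?thesis unfolding Gammaset by (intro exI[of _ \<Psi>]) (auto simp: add.assoc)
qed

lemma inner_regular_simplex:
  fixes v :: "nat \<Rightarrow> real^'n::finite"
  assumes v: "regular_simplex v" and i: "i \<in> {1..CARD('n)+1}" and j: "j \<in> {1..CARD('n)+1}"
  shows "inner (v j) (v i) = (if j = i then real CARD('n) else -1)"
proof (cases "j = i")
  case False
  then show ?thesis using v i j unfolding regular_simplex_def by auto
next
  case True
  let ?J = "{1..CARD('n)+1}"
  have "0 = inner (v i) (\<Sum>j\<in>?J. v j)" using v unfolding regular_simplex_def by simp
  also have "\<dots> = (\<Sum>j\<in>?J. inner (v i) (v j))" by (rule inner_sum_right)
  also have "\<dots> = inner (v i) (v i) + (\<Sum>j\<in>?J - {i}. inner (v i) (v j))"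
    using i by (intro sum.remove) auto
  also have "(\<Sum>j\<in>?J - {i}. inner (v i) (v j)) = (\<Sum>j\<in>?J - {i}. -1)"
    using v i unfolding regular_simplex_def by (intro sum.cong) auto
  also have "\<dots> = - real CARD('n)" using i by simp
  finally show ?thesis using True by simp
qed

lemma vector_matrix_mult_column_weights:
  fixes v :: "nat \<Rightarrow> real^'n::finite" and \<beta> :: "real^'n^'n"
  assumes "\<forall>a k. \<beta> $ a $ k = (\<Sum>j\<in>J. w j k * v j $ a)"
  shows "(x v* \<beta>) $ k = (\<Sum>j\<in>J. w j k * inner (v j) x)"
  using assms
  by (simp add: vector_matrix_mult_def inner_vec_def sum_distrib_left sum_distrib_right
      sum.swap[of _ J UNIV] algebra_simps)

lemma vector_matrix_mult_regular_simplex: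
  fixes v :: "nat \<Rightarrow> real^'n::finite" and \<beta> :: "real^'n^'n"
  assumes v: "regular_simplex v" and i: "i \<in> {1..CARD('n)+1}"
    and \<beta>: "\<forall>a k. \<beta> $ a $ k = (\<Sum>j\<in>{1..CARD('n)+1}. w j k * v j $ a)"
  shows "(v i v* \<beta>) $ k = real (CARD('n)+1) * w i k - (\<Sum>j\<in>{1..CARD('n)+1}. w j k)"
proof -
  let ?J = "{1..CARD('n)+1}"
  have "(v i v* \<beta>) $ k = (\<Sum>j\<in>?J. w j k * inner (v j) (v i))"
    by (rule vector_matrix_mult_column_weights[OF \<beta>])
  also have "\<dots> = (\<Sum>j\<in>?J. real (CARD('n)+1) * (if j = i then w j k else 0) - w j k)"
    using inner_regular_simplex[OF v i] by (intro sum.cong) (auto simp: algebra_simps)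
  also have "\<dots> = real (CARD('n)+1) * w i k - (\<Sum>j\<in>?J. w j k)"
    using i by (simp add: sum_subtractf sum_distrib_left[symmetric])
  finally show ?thesis .
qed

lemma Min_centered_weights_bounds:
  fixes w x :: "'i \<Rightarrow> real"
  assumes J: "finite J" "J \<noteq> {}" and w: "\<And>j. j \<in> J \<Longrightarrow> 0 \<le> w j \<and> w j \<le> c / card J"
    and x: "\<And>i. i \<in> J \<Longrightarrow> x i = card J * w i - (\<Sum>j\<in>J. w j)"
  shows "- c \<le> Min (x ` J)" and "Min (x ` J) \<le> 0" and "\<And>i. i \<in> J \<Longrightarrow> x i - Min (x ` J) \<le> c"
proof -
  have "Min (x ` J) \<in> x ` J" using J by (intro Min_in) auto
  then obtain i0 where i0: "i0 \<in> J" "Min (x ` J) = x i0" by auto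
  have card: "real (card J) > 0" using J by (simp add: card_gt_0_iff)
  have "(\<Sum>j\<in>J. w j) \<le> card J * (c / card J)"
    using w sum_bounded_above[of J w "c / card J"] by auto
  then have "(\<Sum>j\<in>J. w j) \<le> c" using card by simp
  moreover have "0 \<le> card J * w i0" using w[OF i0(1)] by simp
  ultimately show "- c \<le> Min (x ` J)" using i0 x by simp
  have "sum x J = (\<Sum>i\<in>J. card J * w i - (\<Sum>j\<in>J. w j))" using x by simp
  then have "sum x J = 0" by (simp add: sum_subtractf sum_distrib_left[symmetric])
  moreover have "card J * Min (x ` J) \<le> sum x J"
    using J sum_bounded_below[of J "Min (x ` J)" x] by simp
  ultimately show "Min (x ` J) \<le> 0" using card by (simp add: mult_le_0_iff)
  fix i assume "i \<in> J"
  have "x i - Min (x ` J) = card J * (w i - w i0)"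
    unfolding i0(2) using x[OF i0(1)] x[OF \<open>i \<in> J\<close>] by (simp add: algebra_simps)
  also have "\<dots> \<le> card J * (c / card J)"
    using w[OF \<open>i \<in> J\<close>] w[OF i0(1)] card by (intro mult_left_mono) auto
  finally show "x i - Min (x ` J) \<le> c" using card by simp
qed

lemma continuous_on_Min:
  fixes f :: "'i \<Rightarrow> 'a::topological_space \<Rightarrow> 'b::linorder_topology"
  assumes "finite I" "I \<noteq> {}" "\<And>i. i \<in> I \<Longrightarrow> continuous_on S (f i)"
  shows "continuous_on S (\<lambda>x. Min ((\<lambda>i. f i x) ` I))"
  using assms
proof (induction I rule: finite_ne_induct)
  case (insert i I)
  then have "continuous_on S (\<lambda>x. min (f i x) (Min ((\<lambda>i. f i x) ` I)))"
    by (intro continuous_on_min) auto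
  with insert show ?case by simp
qed simp

lemma exists_measurable_simplex_shift:
  fixes kp km :: "'n::finite \<Rightarrow> real" and v :: "nat \<Rightarrow> real^'n"
  assumes v: "regular_simplex v"
  shows "\<exists>\<Phi>. \<Phi> \<in> restrict_space borel (Bset v kp km) \<rightarrow>\<^sub>M restrict_space borel (kbox kp km) \<and>
      (\<forall>\<beta>\<in>Bset v kp km. \<Phi> \<beta> \<in> kbox kp km \<and>
         (\<forall>i\<in>{1..CARD('n)+1}. v i v* \<beta> + \<Phi> \<beta> \<in> kbox kp km))"
proof -
  define J where "J = {1..CARD('n)+1}"
  have J: "finite J" "J \<noteq> {}" "card J = CARD('n) + 1" unfolding J_def by auto
  define \<Phi> where "\<Phi> \<beta> = (\<chi> k. - km k - Min ((\<lambda>i. (v i v* \<beta>) $ k) ` J))" for \<beta> :: "real^'n^'n"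
  have cont: "continuous_on UNIV \<Phi>"
    unfolding \<Phi>_def vector_matrix_mult_def using J by (intro continuous_intros continuous_on_Min) auto
  have in_box: "\<Phi> \<beta> \<in> kbox kp km \<and> (\<forall>i\<in>J. v i v* \<beta> + \<Phi> \<beta> \<in> kbox kp km)"
    if "\<beta> \<in> Bset v kp km" for \<beta>
  proof -
    obtain w where w: "\<forall>j\<in>J. \<forall>k. 0 \<le> w j k \<and> w j k \<le> (kp k + km k) / real (CARD('n)+1)"
      and \<beta>: "\<forall>a k. \<beta> $ a $ k = (\<Sum>j\<in>{1..CARD('n)+1}. w j k * v j $ a)"
      using \<open>\<beta> \<in> Bset v kp km\<close> unfolding Bset_def J_def by blast
    have "- km k \<le> \<Phi> \<beta> $ k \<and> \<Phi> \<beta> $ k \<le> kp k \<and>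
        (\<forall>i\<in>J. - km k \<le> (v i v* \<beta> + \<Phi> \<beta>) $ k \<and> (v i v* \<beta> + \<Phi> \<beta>) $ k \<le> kp k)" for k
    proof -
      let ?x = "\<lambda>i. (v i v* \<beta>) $ k"
      have x: "?x i = card J * w i k - (\<Sum>j\<in>J. w j k)" if "i \<in> J" for i
        using vector_matrix_mult_regular_simplex[OF v _ \<beta>] that J(3) unfolding J_def by simp
      have "0 \<le> w j k \<and> w j k \<le> (kp k + km k) / card J" if "j \<in> J" for j
        using w that J(3) by simp
      note bounds = Min_centered_weights_bounds[OF J(1,2) this x]
      have "Min (?x ` J) \<le> ?x i" if "i \<in> J" for i using J(1) that by simp
      with bounds show ?thesis unfolding \<Phi>_def by force
    qed
    then show ?thesis unfolding kbox_def by auto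
  qed
  have "\<Phi> \<in> restrict_space borel (Bset v kp km) \<rightarrow>\<^sub>M restrict_space borel (kbox kp km)"
    by (intro measurable_restrict_space2 measurable_restrict_space1 borel_measurable_continuous_onI cont)
      (use in_box in \<open>auto simp: space_restrict_space\<close>)
  with in_box show ?thesis unfolding J_def by blast
qed

theorem lemma3p5:
  fixes \<sigma> :: "real^'n::finite^'n" and kp km :: "'n \<Rightarrow> real" and v :: "nat \<Rightarrow> real^'n"
  assumes "invertible \<sigma>"
    and "\<forall>k. kp k \<ge> 0" and "\<forall>k. km k \<ge> 0"
    and "regular_simplex v"
  shows "(\<exists>\<Psi>. \<Psi> \<in> restrict_space borel (Gammaset \<sigma> v kp km) \<rightarrow>\<^sub>M restrict_space borel (Bset v kp km) \<and>
            (\<forall>a\<in>Gammaset \<sigma> v kp km. \<Psi> a \<in> Bset v kp km \<and>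
               a = \<sigma> ** transpose \<sigma> + \<sigma> ** \<Psi> a + transpose (\<Psi> a) ** transpose \<sigma>))
       \<and> (\<exists>\<Phi>. \<Phi> \<in> restrict_space borel (Bset v kp km) \<rightarrow>\<^sub>M restrict_space borel (kbox kp km) \<and>
            (\<forall>\<beta>\<in>Bset v kp km. \<Phi> \<beta> \<in> kbox kp km \<and>
               (\<forall>i\<in>{1..CARD('n)+1}. v i v* \<beta> + \<Phi> \<beta> \<in> kbox kp km)))"
  using exists_measurable_Gammaset_section exists_measurable_simplex_shift[OF \<open>regular_simplex v\<close>]
  by blast

end
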